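(* Let $D$ be a $3$-dicritical digraph that is not a bidirected odd cycle. Then the bidirected part $B(D)$ is a forest.
   Context: Digraphs are finite, with no loops and no parallel arcs; a digon is a pair of arcs $uv,vu$. A $2$-dicolouring of $D$ is a map $V(D)\to\{1,2\}$ such that each colour class induces an acyclic subdigraph. $D$ is $3$-dicritical if $D$ has no $2$-dicolouring but every proper subdigraph has one. The bidirected part $B(D)$ is the undirected graph on $V(D)$ in which $u,v$ are adjacent iff $D$ contains both arcs $uv$ and $vu$. A bidirected odd cycle is the digraph obtained from an odd (undirected) cycle by replacing every edge with a digon. *)

theory Defs
  imports Main
begin

definition digraph :: "'a set \<Rightarrow> ('a \<times> 'a) set \<Rightarrow> bool" where
  "digraph V A \<longleftrightarrow> finite V \<and> A \<subseteq> V \<times> V \<and> (\<forall>v. (v, v) \<notin> A)"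

definition subdigraph :: "'a set \<Rightarrow> ('a \<times> 'a) set \<Rightarrow> 'a set \<Rightarrow> ('a \<times> 'a) set \<Rightarrow> bool" where
  "subdigraph V' A' V A \<longleftrightarrow> V' \<subseteq> V \<and> A' \<subseteq> A \<and> A' \<subseteq> V' \<times> V'"

definition two_dicolouring :: "'a set \<Rightarrow> ('a \<times> 'a) set \<Rightarrow> ('a \<Rightarrow> nat) \<Rightarrow> bool" where
  "two_dicolouring V A c \<longleftrightarrow> (\<forall>v\<in>V. c v \<in> {1, 2}) \<and>
     (\<forall>i\<in>{1::nat, 2}. acyclic (A \<inter> ({v\<in>V. c v = i} \<times> {v\<in>V. c v = i})))"

definition two_dicolourable :: "'a set \<Rightarrow> ('a \<times> 'a) set \<Rightarrow> bool" where
  "two_dicolourable V A \<longleftrightarrow> (\<exists>c. two_dicolouring V A c)"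

definition three_dicritical :: "'a set \<Rightarrow> ('a \<times> 'a) set \<Rightarrow> bool" where
  "three_dicritical V A \<longleftrightarrow> \<not> two_dicolourable V A \<and>
     (\<forall>V' A'. subdigraph V' A' V A \<and> (V', A') \<noteq> (V, A) \<longrightarrow> two_dicolourable V' A')"

definition bidirected_adj :: "('a \<times> 'a) set \<Rightarrow> 'a \<Rightarrow> 'a \<Rightarrow> bool" where
  "bidirected_adj A u v \<longleftrightarrow> (u, v) \<in> A \<and> (v, u) \<in> A"

definition is_forest :: "'a set \<Rightarrow> ('a \<Rightarrow> 'a \<Rightarrow> bool) \<Rightarrow> bool" where
  "is_forest V E \<longleftrightarrow> \<not> (\<exists>vs. length vs \<ge> 3 \<and> distinct vs \<and> set vs \<subseteq> V \<and>
      (\<forall>i < length vs. E (vs ! i) (vs ! ((i + 1) mod length vs))))"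

definition bidirected_odd_cycle :: "'a set \<Rightarrow> ('a \<times> 'a) set \<Rightarrow> bool" where
  "bidirected_odd_cycle V A \<longleftrightarrow> (\<exists>vs. length vs \<ge> 3 \<and> odd (length vs) \<and> distinct vs \<and>
      V = set vs \<and>
      A = (\<Union>i<length vs. {(vs ! i, vs ! ((i + 1) mod length vs)),
                            (vs ! ((i + 1) mod length vs), vs ! i)}))"

end

theory Submission
  imports Defs
begin

text \<open>In a 2-dicolouring the two ends of a digon get different colours, so along a bidirected
  cycle the colours alternate. An odd bidirected cycle is therefore a subdigraph without a
  2-dicolouring, and criticality forces it to be all of D. On an even bidirected cycle, delete
  one arc uv and 2-dicolour the rest: the remaining bidirected path from v to u has odd length,
  so u and v get different colours, and the deleted arc can be put back.\<close>

definition bidirected_closed_walk :: "('a \<times> 'a) set \<Rightarrow> 'a list \<Rightarrow> bool" where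
  "bidirected_closed_walk A vs \<longleftrightarrow>
     (\<forall>i < length vs. bidirected_adj A (vs ! i) (vs ! ((i + 1) mod length vs)))"

definition cycle_digons :: "'a list \<Rightarrow> ('a \<times> 'a) set" where
  "cycle_digons vs = (\<Union>i<length vs. {(vs ! i, vs ! ((i + 1) mod length vs)),
                                      (vs ! ((i + 1) mod length vs), vs ! i)})"

lemma bidirected_closed_walk_cycle_digons: "bidirected_closed_walk (cycle_digons vs) vs"
  unfolding bidirected_closed_walk_def bidirected_adj_def cycle_digons_def by blast

lemma cycle_digons_subset:
  assumes "bidirected_closed_walk A vs"
  shows "cycle_digons vs \<subseteq> A"
  using assms unfolding bidirected_closed_walk_def bidirected_adj_def cycle_digons_def by blast

lemma nth_mod_length_in_set:
  assumes "0 < length vs"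
  shows "vs ! (k mod length vs) \<in> set vs"
  using assms by simp

lemma cycle_digons_subset_Times: "cycle_digons vs \<subseteq> set vs \<times> set vs"
  unfolding cycle_digons_def by (auto intro!: nth_mod_length_in_set)

lemma bidirected_adj_Diff:
  "bidirected_adj (A - {a}) x y \<longleftrightarrow> bidirected_adj A x y \<and> (x, y) \<noteq> a \<and> (y, x) \<noteq> a"
  unfolding bidirected_adj_def by blast

lemma two_dicolouring_digon:
  assumes "two_dicolouring V A c" "x \<in> V" "y \<in> V" "bidirected_adj A x y"
  shows "c x \<noteq> c y"
proof
  assume same: "c x = c y"
  let ?C = "{v\<in>V. c v = c x}"
  have "acyclic (A \<inter> (?C \<times> ?C))"
    using assms(1,2) unfolding two_dicolouring_def by blast
  moreover have "(x, y) \<in> A \<inter> (?C \<times> ?C)" "(y, x) \<in> A \<inter> (?C \<times> ?C)"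
    using assms(2-4) same unfolding bidirected_adj_def by auto
  ultimately show False
    unfolding acyclic_def by (meson trancl.r_into_trancl trancl_into_trancl)
qed

lemma two_dicolouring_insert_bichromatic:
  assumes "two_dicolouring V A c" "c u \<noteq> c v"
  shows "two_dicolouring V (insert (u, v) A) c"
proof -
  have "insert (u, v) A \<inter> (C \<times> C) = A \<inter> (C \<times> C)" if "C = {x\<in>V. c x = i}" for C i
    using that assms(2) by auto
  then show ?thesis
    using assms(1) unfolding two_dicolouring_def by simp
qed

lemma alternating_two_colours_parity:
  fixes c :: "'b \<Rightarrow> nat"
  assumes "\<forall>i<m. c (f i) \<noteq> c (f (Suc i))" "\<forall>i\<le>m. c (f i) \<in> {1, 2}"
  shows "c (f m) = c (f 0) \<longleftrightarrow> even m"
  using assms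
proof (induction m)
  case 0
  then show ?case by simp
next
  case (Suc m)
  then have "c (f m) = c (f 0) \<longleftrightarrow> even m" by auto
  moreover have "c (f m) \<in> {1, 2}" "c (f (Suc m)) \<in> {1, 2}" "c (f 0) \<in> {1, 2}"
    "c (f m) \<noteq> c (f (Suc m))"
    using Suc.prems by auto
  ultimately show ?case by auto
qed

lemma two_dicolouring_bidirected_path_parity:
  assumes "two_dicolouring V A c" "\<forall>i\<le>m. f i \<in> V"
    and "\<forall>i<m. bidirected_adj A (f i) (f (Suc i))"
  shows "c (f m) = c (f 0) \<longleftrightarrow> even m"
proof (rule alternating_two_colours_parity)
  show "\<forall>i<m. c (f i) \<noteq> c (f (Suc i))"
    using assms two_dicolouring_digon by (metis Suc_leI less_imp_le_nat)
  show "\<forall>i\<le>m. c (f i) \<in> {1, 2}"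
    using assms(1,2) unfolding two_dicolouring_def by blast
qed

lemma two_dicolouring_bidirected_closed_walk_even:
  assumes "two_dicolouring V A c" "set vs \<subseteq> V" "bidirected_closed_walk A vs"
  shows "even (length vs)"
proof (cases "vs = []")
  case False
  define n where "n = length vs"
  have "n > 0" using False n_def by simp
  define f where "f i = vs ! (i mod n)" for i
  have "c (f n) = c (f 0) \<longleftrightarrow> even n"
  proof (rule two_dicolouring_bidirected_path_parity[OF assms(1)])
    show "\<forall>i\<le>n. f i \<in> V"
      using assms(2) \<open>n > 0\<close> unfolding f_def n_def by auto
    show "\<forall>i<n. bidirected_adj A (f i) (f (Suc i))"
      using assms(3) unfolding bidirected_closed_walk_def f_def n_def by simp
  qed
  then show ?thesis unfolding f_def n_def by simp
qed simp

lemma even_bidirected_cycle_bichromatic_arc: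
  assumes "two_dicolouring V (A - {(vs ! 0, vs ! 1)}) c" "set vs \<subseteq> V"
    and "bidirected_closed_walk A vs" "distinct vs" "length vs \<ge> 3" "even (length vs)"
  shows "c (vs ! 0) \<noteq> c (vs ! 1)"
proof -
  define n where "n = length vs"
  have n3: "n \<ge> 3" using assms(5) n_def by simp
  have idx: "vs ! i = vs ! j \<longleftrightarrow> i = j" if "i < n" "j < n" for i j
    using assms(4) that n_def nth_eq_iff_index_eq by blast
  define f where "f i = vs ! ((i + 1) mod n)" for i
  \<comment> \<open>f walks once around the cycle from vs ! 1 to vs ! 0, avoiding the deleted arc\<close>
  have "c (f (n - 1)) = c (f 0) \<longleftrightarrow> even (n - 1)"
  proof (rule two_dicolouring_bidirected_path_parity[OF assms(1)])
    show "\<forall>i\<le>n - 1. f i \<in> V"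
      using assms(2) n3 nth_mod_length_in_set[of vs] unfolding f_def n_def by fastforce
    show "\<forall>i<n - 1. bidirected_adj (A - {(vs ! 0, vs ! 1)}) (f i) (f (Suc i))"
    proof (intro allI impI)
      fix i assume i: "i < n - 1"
      have f_i: "f i = vs ! (i + 1)" and f_Suc: "f (Suc i) = vs ! ((i + 1 + 1) mod n)"
        using i unfolding f_def by simp_all
      have "bidirected_adj A (f i) (f (Suc i))"
        using assms(3) i unfolding bidirected_closed_walk_def f_i f_Suc n_def by simp
      moreover have "f i \<noteq> vs ! 0"
        using i n3 idx[of "i + 1" 0] unfolding f_i by simp
      moreover have "f (Suc i) \<noteq> vs ! 0 \<or> f i \<noteq> vs ! 1"
        using i n3 idx[of "(i + 1 + 1) mod n" 0] idx[of "i + 1" 1] unfolding f_i f_Suc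
        by (auto dest: dvd_imp_le)
      ultimately show "bidirected_adj (A - {(vs ! 0, vs ! 1)}) (f i) (f (Suc i))"
        unfolding bidirected_adj_Diff by auto
    qed
  qed
  moreover have "f (n - 1) = vs ! 0" "f 0 = vs ! 1"
    using n3 unfolding f_def by simp_all
  ultimately show ?thesis
    using assms(6) n3 unfolding n_def by auto
qed

lemma three_dicritical_bidirected_cycle_odd:
  assumes "digraph V A" "three_dicritical V A" "set vs \<subseteq> V"
    and "bidirected_closed_walk A vs" "distinct vs" "length vs \<ge> 3"
  shows "odd (length vs)"
proof
  assume even: "even (length vs)"
  define a where "a = (vs ! 0, vs ! 1)"
  have "bidirected_adj A (vs ! 0) (vs ! ((0 + 1) mod length vs))"
    using assms(4)[unfolded bidirected_closed_walk_def, rule_format, of 0] assms(6) by linarith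
  then have "bidirected_adj A (vs ! 0) (vs ! 1)"
    using assms(6) by simp
  then have "a \<in> A" unfolding a_def bidirected_adj_def by simp
  then have "subdigraph V (A - {a}) V A" "(V, A - {a}) \<noteq> (V, A)"
    using assms(1) unfolding subdigraph_def digraph_def by auto
  then obtain c where c: "two_dicolouring V (A - {a}) c"
    using assms(2) unfolding three_dicritical_def two_dicolourable_def by blast
  have "c (vs ! 0) \<noteq> c (vs ! 1)"
    using even_bidirected_cycle_bichromatic_arc[OF c[unfolded a_def] assms(3-6) even] .
  then have "two_dicolouring V (insert a (A - {a})) c"
    using two_dicolouring_insert_bichromatic[OF c] unfolding a_def by blast
  then have "two_dicolourable V A"
    using \<open>a \<in> A\<close> insert_Diff unfolding two_dicolourable_def by metis
  then show False
    using assms(2) unfolding three_dicritical_def by simp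
qed

lemma three_dicritical_odd_bidirected_cycle:
  assumes "three_dicritical V A" "set vs \<subseteq> V" "bidirected_closed_walk A vs"
    and "distinct vs" "length vs \<ge> 3" "odd (length vs)"
  shows "bidirected_odd_cycle V A"
proof -
  have "subdigraph (set vs) (cycle_digons vs) V A"
    using assms(2,3) cycle_digons_subset cycle_digons_subset_Times unfolding subdigraph_def by blast
  moreover have "\<not> two_dicolourable (set vs) (cycle_digons vs)"
    using two_dicolouring_bidirected_closed_walk_even bidirected_closed_walk_cycle_digons assms(6)
    unfolding two_dicolourable_def by blast
  ultimately have "(set vs, cycle_digons vs) = (V, A)"
    using assms(1) unfolding three_dicritical_def by blast
  then show ?thesis
    using assms(4-6) unfolding bidirected_odd_cycle_def cycle_digons_def by blast
qed

theorem proposition28: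
  fixes V :: "'a set" and A :: "('a \<times> 'a) set"
  assumes "digraph V A"
    and "three_dicritical V A"
    and "\<not> bidirected_odd_cycle V A"
  shows "is_forest V (bidirected_adj A)"
proof (rule ccontr)
  assume "\<not> is_forest V (bidirected_adj A)"
  then obtain vs where "length vs \<ge> 3" "distinct vs" "set vs \<subseteq> V" "bidirected_closed_walk A vs"
    unfolding is_forest_def bidirected_closed_walk_def by blast
  moreover from this have "odd (length vs)"
    using three_dicritical_bidirected_cycle_odd assms(1,2) by blast
  ultimately have "bidirected_odd_cycle V A"
    using three_dicritical_odd_bidirected_cycle assms(2) by blast
  with assms(3) show False ..
qed

end
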